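(* Let $g\in C^2(\overline U\to\mathbb R)$ and suppose that the discrete transversality inequality $\nabla g(\hat{\bm x}^* )\cdot\bm f^\tau_\pm(\cdot)\ge\hat\alpha_S^2>0$ holds at the arguments $(t,\bm x^\tau(t),\hat t^*,\hat{\bm x}^* )$ for $\bm f^\tau_-$ ($t\in[t_k,\hat t^*]$) and $(\hat t^*,\hat{\bm x}^*,t,\bm x^\tau(t))$ for $\bm f^\tau_+$ ($t\in[\hat t^*,t_{k+1}]$) (as guaranteed for sufficiently small $\tau$ by the discrete transversality lemma). Then for all $t\in[t_k,t_{k+1}]$, $$|t-\hat t^*|\le\frac{\hat M(t-\hat t^* )^2+L_g\|\bm x^\tau(t;\bm x_k,t_k)-\bm x^\tau(\hat t^*;\bm x_k,t_k)\|}{\hat\alpha_S^2},$$ where $L_g$ is the Lipschitz constant of $g$, $\hat M=\frac12\max(\hat M_-,\hat M_+)$, $$\hat M_-=\sup_{t\in[t_k,\hat t^*],\,s\in[0,1]}\big|\bm f^\tau_-(t,\bm x^\tau(t),\hat t^*,\hat{\bm x}^* )\cdot H_g(\bm x^\tau(t)+s(\hat{\bm x}^*-\bm x^\tau(t)))\,\bm f^\tau_-(t,\bm x^\tau(t),\hat t^*,\hat{\bm x}^* )\big|,$$ $$\hat M_+=\sup_{t\in[\hat t^*,t_{k+1}],\,s\in[0,1]}\big|\bm f^\tau_+(\hat t^*,\hat{\bm x}^*,t,\bm x^\tau(t))\cdot H_g(\hat{\bm x}^*+s(\bm x^\tau(t)-\hat{\bm x}^* ))\,\bm f^\tau_+(\hat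 t^*,\hat{\bm x}^*,t,\bm x^\tau(t))\big|,$$ and $H_g$ is the Hessian of $g$.
   Context: Setting: $U\subset\mathbb R^d$ bounded open, switching function $g$, $S=\{g=0\}$, $U_\pm=\{\pm g>0\}$. Discrete vector fields $\bm f^\tau_\pm$. Transition scheme from $\bm x_k\in U_-$ at time $t_k$ with $t_{k+1}=t_k+\tau$: $(\hat t^*,\hat{\bm x}^* )$ with $\hat t^*\in[t_k,t_{k+1}]$ solves $\bm x=\bm x_k+(t-t_k)\bm f^\tau_-(t_k,\bm x_k,t,\bm x)$, $g(\bm x)=0$. Discrete solution $\bm x^\tau(t)=\bm x^\tau(t;\bm x_k,t_k)$: for $t\in[t_k,\hat t^*]$ it satisfies $\hat{\bm x}^*-\bm x^\tau(t)=(\hat t^*-t)\bm f^\tau_-(t,\bm x^\tau(t),\hat t^*,\hat{\bm x}^* )$, and for $t\in[\hat t^*,t_{k+1}]$ it satisfies $\bm x^\tau(t)=\hat{\bm x}^*+(t-\hat t^* )\bm f^\tau_+(\hat t^*,\hat{\bm x}^*,t,\bm x^\tau(t))$; $\bm x^\tau(\hat t^* )=\hat{\bm x}^*$. *)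

theory Defs
  imports "HOL-Analysis.Analysis"
begin

text \<open>Quadratic-form bounds of Lemma 3.5.  Hg x is the Hessian of g at x,
  fm, fp are the discrete vector fields, x the discrete solution,
  ts, xs the transition point (t-hat-star, x-hat-star).\<close>

definition Mhat_minus ::
  "(real^'n \<Rightarrow> real^'n^'n) \<Rightarrow> (real \<Rightarrow> real^'n \<Rightarrow> real \<Rightarrow> real^'n \<Rightarrow> real^'n)
   \<Rightarrow> (real \<Rightarrow> real^'n) \<Rightarrow> real \<Rightarrow> real \<Rightarrow> real^'n \<Rightarrow> real" where
  "Mhat_minus Hg fm x tk ts xs =
     Sup {\<bar>fm t (x t) ts xs \<bullet> (Hg (x t + s *\<^sub>R (xs - x t)) *v fm t (x t) ts xs)\<bar>
          | t s. t \<in> {tk..ts} \<and> s \<in> {0..1}}"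

definition Mhat_plus ::
  "(real^'n \<Rightarrow> real^'n^'n) \<Rightarrow> (real \<Rightarrow> real^'n \<Rightarrow> real \<Rightarrow> real^'n \<Rightarrow> real^'n)
   \<Rightarrow> (real \<Rightarrow> real^'n) \<Rightarrow> real \<Rightarrow> real \<Rightarrow> real^'n \<Rightarrow> real" where
  "Mhat_plus Hg fp x tk1 ts xs =
     Sup {\<bar>fp ts xs t (x t) \<bullet> (Hg (xs + s *\<^sub>R (x t - xs)) *v fp ts xs t (x t))\<bar>
          | t s. t \<in> {ts..tk1} \<and> s \<in> {0..1}}"

end

theory Submission
  imports Defs
begin

text \<open>On either side of the transition point the increment \<open>x t - x\<^sup>* = c v\<close> is a multiple of
  a vector field value \<open>v\<close> with \<open>\<nabla>g(x\<^sup>*) \<cdot> v \<ge> \<alpha>\<^sup>2\<close>. Taylor's formula for \<open>g\<close> at \<open>x\<^sup>*\<close> with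
  Lagrange remainder then gives \<open>g(x t) - g(x\<^sup>*) = c \<nabla>g(x\<^sup>*) \<cdot> v + c\<^sup>2/2 v \<cdot> H\<^sub>g(\<xi>) v\<close>, so
  \<open>|c| \<alpha>\<^sup>2 \<le> |g(x t) - g(x\<^sup>*)| + c\<^sup>2/2 |v \<cdot> H\<^sub>g(\<xi>) v|\<close>; the first term is controlled by the
  Lipschitz constant of \<open>g\<close>, the second by \<open>M\<^sub>\<plusminus>\<close>, and \<open>|c| = |t - t\<^sup>*|\<close>.\<close>

lemma taylor2_closed_segment:
  fixes g :: "real^'n \<Rightarrow> real" and Dg :: "real^'n \<Rightarrow> real^'n" and Hg :: "real^'n \<Rightarrow> real^'n^'n"
  assumes g_diff: "\<And>y. y \<in> closed_segment a b \<Longrightarrow> (g has_derivative (\<lambda>h. Dg y \<bullet> h)) (at y)"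
    and Dg_diff: "\<And>y. y \<in> closed_segment a b \<Longrightarrow> (Dg has_derivative (\<lambda>h. Hg y *v h)) (at y)"
  obtains s where "s \<in> {0..1}"
    "g b = g a + Dg a \<bullet> (b - a) + 1/2 * ((b - a) \<bullet> (Hg (a + s *\<^sub>R (b - a)) *v (b - a)))"
proof -
  define d where "d = b - a"
  define p where "p = (\<lambda>s::real. a + s *\<^sub>R d)"
  have p_seg: "p s \<in> closed_segment a b" if "s \<in> {0..1}" for s
    using that unfolding p_def d_def closed_segment_def
    by (auto intro!: exI[of _ s] simp: algebra_simps)
  have p_deriv: "(p has_derivative (\<lambda>r. r *\<^sub>R d)) (at s)" for s
    unfolding p_def by (auto intro!: derivative_eq_intros)
  have g_line: "((\<lambda>s. g (p s)) has_real_derivative Dg (p s) \<bullet> d) (at s)" if "s \<in> {0..1}" for s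
    using has_derivative_compose[OF p_deriv g_diff[OF p_seg[OF that]]]
    by (simp add: o_def has_field_derivative_def mult_commute_abs)
  have Dg_line: "((\<lambda>s. Dg (p s) \<bullet> d) has_real_derivative d \<bullet> (Hg (p s) *v d)) (at s)"
    if "s \<in> {0..1}" for s
  proof -
    have "((\<lambda>s. Dg (p s) \<bullet> d) has_derivative (\<lambda>r. (Hg (p s) *v (r *\<^sub>R d)) \<bullet> d)) (at s)"
      using has_derivative_compose[OF p_deriv Dg_diff[OF p_seg[OF that]]]
      by (intro has_derivative_inner_left) (simp add: o_def)
    then show ?thesis
      by (simp add: has_field_derivative_def matrix_vector_mult_scaleR inner_commute mult_commute_abs)
  qed
  define diff where "diff = (\<lambda>m::nat. if m = 0 then (\<lambda>s. g (p s))
    else if m = 1 then (\<lambda>s. Dg (p s) \<bullet> d) else (\<lambda>s. d \<bullet> (Hg (p s) *v d)))"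
  have "\<forall>m s. m < 2 \<and> 0 \<le> s \<and> s \<le> 1 \<longrightarrow> (diff m has_real_derivative diff (Suc m) s) (at s)"
    using g_line Dg_line by (auto simp: diff_def less_2_cases_iff)
  then obtain s where s: "0 < s" "s < 1"
    and "diff 0 1 = (\<Sum>m<2. diff m 0 / fact m * (1 - 0) ^ m) + diff 2 s / fact 2 * (1 - 0) ^ 2"
    using Taylor[of 2 diff "diff 0" 0 1 0 1] by auto
  then have "g b = g a + Dg a \<bullet> d + 1/2 * (d \<bullet> (Hg (p s) *v d))"
    by (simp add: diff_def numeral_2_eq_2 p_def d_def)
  with s show thesis
    by (intro that[of s]) (auto simp: p_def d_def)
qed

lemma transversal_increment_bound:
  fixes g :: "real^'n \<Rightarrow> real" and Dg :: "real^'n \<Rightarrow> real^'n" and Hg :: "real^'n \<Rightarrow> real^'n^'n"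
  assumes g_diff: "\<And>y. y \<in> S \<Longrightarrow> (g has_derivative (\<lambda>h. Dg y \<bullet> h)) (at y)"
    and Dg_diff: "\<And>y. y \<in> S \<Longrightarrow> (Dg has_derivative (\<lambda>h. Hg y *v h)) (at y)"
    and lipschitz: "L-lipschitz_on S g"
    and segment: "closed_segment a b \<subseteq> S"
    and increment: "b - a = c *\<^sub>R v"
    and transversal: "alpha\<^sup>2 \<le> Dg a \<bullet> v"
    and hessian_bound: "\<And>s. s \<in> {0..1} \<Longrightarrow> \<bar>v \<bullet> (Hg (a + s *\<^sub>R (b - a)) *v v)\<bar> \<le> M"
  shows "\<bar>c\<bar> * alpha\<^sup>2 \<le> 1/2 * M * c\<^sup>2 + L * norm (b - a)"
proof -
  obtain s where s: "s \<in> {0..1}"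
    and "g b = g a + Dg a \<bullet> (b - a) + 1/2 * ((b - a) \<bullet> (Hg (a + s *\<^sub>R (b - a)) *v (b - a)))"
    using taylor2_closed_segment[of a b g Dg Hg] g_diff Dg_diff segment by blast
  moreover define Q where "Q = v \<bullet> (Hg (a + s *\<^sub>R (b - a)) *v v)"
  ultimately have taylor: "g b - g a = c * (Dg a \<bullet> v) + 1/2 * c\<^sup>2 * Q"
    unfolding increment by (simp add: matrix_vector_mult_scaleR power2_eq_square algebra_simps)
  have "\<bar>c\<bar> * alpha\<^sup>2 \<le> \<bar>c * (Dg a \<bullet> v)\<bar>"
    using transversal by (simp add: abs_mult mult_left_mono)
  also have "\<dots> \<le> \<bar>g b - g a\<bar> + 1/2 * c\<^sup>2 * \<bar>Q\<bar>"
    using taylor abs_triangle_ineq4[of "g b - g a" "1/2 * c\<^sup>2 * Q"]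
    by (simp add: abs_mult algebra_simps)
  also have "\<dots> \<le> L * norm (b - a) + 1/2 * c\<^sup>2 * M"
  proof -
    have "a \<in> S" "b \<in> S" using segment by auto
    then have "\<bar>g b - g a\<bar> \<le> L * norm (b - a)"
      using lipschitz_onD[OF lipschitz] by (simp add: dist_real_def dist_norm)
    moreover have "c\<^sup>2 * \<bar>Q\<bar> \<le> c\<^sup>2 * M"
      unfolding Q_def by (intro mult_left_mono hessian_bound s) simp
    ultimately show ?thesis by simp
  qed
  finally show ?thesis by (simp add: mult.commute)
qed

lemma Mhat_minus_upper:
  assumes "bdd_above {\<bar>fm t (x t) ts xs \<bullet> (Hg (x t + s *\<^sub>R (xs - x t)) *v fm t (x t) ts xs)\<bar>
          | t s. t \<in> {tk..ts} \<and> s \<in> {0..1}}"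
    and "t \<in> {tk..ts}" "s \<in> {0..1}"
  shows "\<bar>fm t (x t) ts xs \<bullet> (Hg (xs + s *\<^sub>R (x t - xs)) *v fm t (x t) ts xs)\<bar>
      \<le> Mhat_minus Hg fm x tk ts xs"
proof -
  have "xs + s *\<^sub>R (x t - xs) = x t + (1 - s) *\<^sub>R (xs - x t)" by (simp add: algebra_simps)
  then show ?thesis
    unfolding Mhat_minus_def using assms
    by (intro cSup_upper CollectI exI[of _ t] exI[of _ "1 - s"]) auto
qed

lemma Mhat_plus_upper:
  assumes "bdd_above {\<bar>fp ts xs t (x t) \<bullet> (Hg (xs + s *\<^sub>R (x t - xs)) *v fp ts xs t (x t))\<bar>
          | t s. t \<in> {ts..tk1} \<and> s \<in> {0..1}}"
    and "t \<in> {ts..tk1}" "s \<in> {0..1}"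
  shows "\<bar>fp ts xs t (x t) \<bullet> (Hg (xs + s *\<^sub>R (x t - xs)) *v fp ts xs t (x t))\<bar>
      \<le> Mhat_plus Hg fp x tk1 ts xs"
  unfolding Mhat_plus_def using assms by (intro cSup_upper) auto

theorem lemma3p5:
  fixes U :: "(real^'n) set" and g :: "real^'n \<Rightarrow> real"
    and Dg :: "real^'n \<Rightarrow> real^'n" and Hg :: "real^'n \<Rightarrow> real^'n^'n"
    and fm fp :: "real \<Rightarrow> real^'n \<Rightarrow> real \<Rightarrow> real^'n \<Rightarrow> real^'n"
    and x :: "real \<Rightarrow> real^'n"
    and tau tk ts alpha Lg :: real and xk xs :: "real^'n"
  assumes U: "bounded U" "open U"
    and g_diff: "\<And>y. y \<in> closure U \<Longrightarrow> (g has_derivative (\<lambda>h. Dg y \<bullet> h)) (at y)"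
    and Dg_diff: "\<And>y. y \<in> closure U \<Longrightarrow> (Dg has_derivative (\<lambda>h. Hg y *v h)) (at y)"
    and Hg_cont: "continuous_on (closure U) Hg"
    and Lg: "Lg-lipschitz_on (closure U) g"
    and tau: "tau > 0"
    and xk: "xk \<in> U" "g xk < 0"
    and ts: "ts \<in> {tk..tk + tau}"
    and xs_eq: "xs = xk + (ts - tk) *\<^sub>R fm tk xk ts xs"
    and xs_S: "g xs = 0"
    and x_minus: "\<And>t. t \<in> {tk..ts} \<Longrightarrow> xs - x t = (ts - t) *\<^sub>R fm t (x t) ts xs"
    and x_plus: "\<And>t. t \<in> {ts..tk + tau} \<Longrightarrow> x t = xs + (t - ts) *\<^sub>R fp ts xs t (x t)"
    and x_ts: "x ts = xs"
    and seg: "\<And>t. t \<in> {tk..tk + tau} \<Longrightarrow> closed_segment (x t) xs \<subseteq> closure U"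
    and alpha: "alpha\<^sup>2 > 0"
    and transv_minus: "\<And>t. t \<in> {tk..ts} \<Longrightarrow> Dg xs \<bullet> fm t (x t) ts xs \<ge> alpha\<^sup>2"
    and transv_plus: "\<And>t. t \<in> {ts..tk + tau} \<Longrightarrow> Dg xs \<bullet> fp ts xs t (x t) \<ge> alpha\<^sup>2"
    and bdd_minus: "bdd_above {\<bar>fm t (x t) ts xs \<bullet> (Hg (x t + s *\<^sub>R (xs - x t)) *v fm t (x t) ts xs)\<bar>
          | t s. t \<in> {tk..ts} \<and> s \<in> {0..1}}"
    and bdd_plus: "bdd_above {\<bar>fp ts xs t (x t) \<bullet> (Hg (xs + s *\<^sub>R (x t - xs)) *v fp ts xs t (x t))\<bar>
          | t s. t \<in> {ts..tk + tau} \<and> s \<in> {0..1}}"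
  shows "\<forall>t \<in> {tk..tk + tau}.
     \<bar>t - ts\<bar> \<le>
       ((1/2) * max (Mhat_minus Hg fm x tk ts xs) (Mhat_plus Hg fp x (tk + tau) ts xs) * (t - ts)\<^sup>2
        + Lg * norm (x t - x ts)) / alpha\<^sup>2"
proof
  fix t assume t: "t \<in> {tk..tk + tau}"
  define M where "M = max (Mhat_minus Hg fm x tk ts xs) (Mhat_plus Hg fp x (tk + tau) ts xs)"
  have segment: "closed_segment xs (x t) \<subseteq> closure U"
    using seg[OF t] by (simp add: closed_segment_commute)
  note increment_bound = transversal_increment_bound[OF g_diff Dg_diff Lg segment]
  have "\<bar>t - ts\<bar> * alpha\<^sup>2 \<le> 1/2 * M * (t - ts)\<^sup>2 + Lg * norm (x t - xs)"
  proof (cases "t \<le> ts")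
    case True
    with t have t_minus: "t \<in> {tk..ts}" by simp
    have "x t - xs = (t - ts) *\<^sub>R fm t (x t) ts xs"
      using x_minus[OF t_minus] by (simp add: algebra_simps)
    then show ?thesis
      using increment_bound transv_minus[OF t_minus]
        Mhat_minus_upper[where fm = fm and x = x and Hg = Hg, OF bdd_minus t_minus]
      by (simp add: M_def max.coboundedI1)
  next
    case False
    with t have t_plus: "t \<in> {ts..tk + tau}" by simp
    have "x t - xs = (t - ts) *\<^sub>R fp ts xs t (x t)"
      using x_plus[OF t_plus] by (simp add: algebra_simps)
    then show ?thesis
      using increment_bound transv_plus[OF t_plus]
        Mhat_plus_upper[where fp = fp and x = x and Hg = Hg, OF bdd_plus t_plus]
      by (simp add: M_def max.coboundedI2)
  qed
  then show "\<bar>t - ts\<bar> \<le> (1/2 * M * (t - ts)\<^sup>2 + Lg * norm (x t - x ts)) / alpha\<^sup>2"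
    using alpha by (simp add: x_ts pos_le_divide_eq)
qed

end
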